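(* Let $A \in \mathbb{C}^{n \times n}$, and fix $A^-\in A\{1\}$ and $A^{GD}\in A\{GD\}$. Let $A^{GD1}=A^{GD}AA^{-}$. Then: (i) $A^{GD1}$ satisfies $AA^{GD1}A=A$ and $A^{GD1}AA^{GD1}=A^{GD1}$; (ii) $A^mA^{GD1} =A^mA^{-}$ and $A^{GD1}A^m = A^{GD}A^m$ for every positive integer $m$; (iii) $AA^{GD1}=P_{R(A),N(AA^{-})}$; (iv) $A^{GD1}A=P_{R(A^{GD}A),N(A)}$.
   Context: For $A\in\mathbb{C}^{n\times n}$, the index $ind(A)$ is the smallest nonnegative integer $k$ with $\mathrm{rank}(A^k)=\mathrm{rank}(A^{k+1})$. $A\{1\}$ denotes the set of inner inverses of $A$, i.e. matrices $X$ with $AXA=A$. With $k=ind(A)$, $A\{GD\}$ denotes the set of G-Drazin inverses of $A$, i.e. matrices $X\in\mathbb{C}^{n\times n}$ with $AXA=A$, $XA^{k+1}=A^k$ and $A^{k+1}X=A^k$. $R(\cdot)$ and $N(\cdot)$ denote range and null space, and $P_{S,T}$ denotes the (oblique) projector onto the subspace $S$ along the subspace $T$. *)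

theory Defs
  imports "HOL-Analysis.Analysis"
begin

type_synonym 'n cmat = "complex ^'n ^'n"

primrec matpow :: "'a::comm_ring_1 ^'n^'n \<Rightarrow> nat \<Rightarrow> 'a^'n^'n" where
  "matpow A 0 = mat 1"
| "matpow A (Suc k) = matpow A k ** A"

definition ind :: "complex^'n^'n \<Rightarrow> nat" where
  "ind A = (LEAST k. rank (matpow A k) = rank (matpow A (Suc k)))"

definition inner_inverses :: "complex^'n^'n \<Rightarrow> (complex^'n^'n) set" where
  "inner_inverses A = {X. A ** X ** A = A}"

definition GD_inverses :: "complex^'n^'n \<Rightarrow> (complex^'n^'n) set" where
  "GD_inverses A = {X. A ** X ** A = A
      \<and> X ** matpow A (Suc (ind A)) = matpow A (ind A)
      \<and> matpow A (Suc (ind A)) ** X = matpow A (ind A)}"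

definition range_mat :: "'a::semiring_1^'n^'m \<Rightarrow> ('a^'m) set" where
  "range_mat A = {A *v x | x. True}"

definition null_mat :: "'a::semiring_1^'n^'m \<Rightarrow> ('a^'n) set" where
  "null_mat A = {x. A *v x = 0}"

definition is_projector :: "complex^'n^'n \<Rightarrow> (complex^'n) set \<Rightarrow> (complex^'n) set \<Rightarrow> bool" where
  "is_projector P S T \<longleftrightarrow> S \<inter> T = {0}
      \<and> (\<forall>z. \<exists>x\<in>S. \<exists>y\<in>T. z = x + y)
      \<and> (\<forall>x\<in>S. P *v x = x) \<and> (\<forall>y\<in>T. P *v y = 0)"

end

theory Submission
  imports Defs
begin

text \<open>They give A A^GD1 = A A^- and
  A^GD1 A = A^GD A. Both are idempotent, an idempotent is the projector onto its range
  along its null space, and R(A A^-) = R(A), N(A^GD A) = N(A).\<close>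

lemma matpow_commute: "matpow A k ** A = A ** matpow A k"
  by (induction k) (simp_all add: matrix_mul_lid matrix_mul_rid matrix_mul_assoc[symmetric])

lemma matpow_Suc_left: "matpow A (Suc k) = A ** matpow A k"
  by (simp add: matpow_commute)

lemma matpow_Suc_mult_cong:
  "A ** X = A ** Y \<Longrightarrow> matpow A (Suc k) ** X = matpow A (Suc k) ** Y"
  by (simp add: matrix_mul_assoc[symmetric])

lemma mult_matpow_Suc_cong:
  "X ** A = Y ** A \<Longrightarrow> X ** matpow A (Suc k) = Y ** matpow A (Suc k)"
  by (unfold matpow_Suc_left) (simp add: matrix_mul_assoc)

lemma inner_inverse_mult_left:
  "A ** G ** A = A \<Longrightarrow> A ** (G ** A ** M) = A ** M"
  by (simp add: matrix_mul_assoc)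

lemma inner_inverse_mult_right:
  "A ** M ** A = A \<Longrightarrow> G ** A ** M ** A = G ** A"
  by (metis matrix_mul_assoc)

lemma inner_inverse_idempotent_left:
  "A ** X ** A = A \<Longrightarrow> (A ** X) ** (A ** X) = A ** X"
  by (simp add: matrix_mul_assoc)

lemma inner_inverse_idempotent_right:
  "A ** X ** A = A \<Longrightarrow> (X ** A) ** (X ** A) = X ** A"
  by (metis matrix_mul_assoc)

lemma range_mat_inner_inverse:
  assumes "A ** X ** A = A"
  shows "range_mat (A ** X) = range_mat A"
proof
  show "range_mat (A ** X) \<subseteq> range_mat A"
    by (auto simp: range_mat_def matrix_vector_mul_assoc[symmetric])
  show "range_mat A \<subseteq> range_mat (A ** X)"
  proof
    fix y assume "y \<in> range_mat A"
    then obtain x where "y = A *v x" by (auto simp: range_mat_def)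
    then have "y = (A ** X) *v (A *v x)"
      by (simp add: matrix_vector_mul_assoc assms)
    then show "y \<in> range_mat (A ** X)" by (auto simp: range_mat_def)
  qed
qed

lemma null_mat_inner_inverse:
  assumes "A ** X ** A = A"
  shows "null_mat (X ** A) = null_mat A"
proof
  show "null_mat A \<subseteq> null_mat (X ** A)"
    by (auto simp: null_mat_def matrix_vector_mul_assoc[symmetric])
  show "null_mat (X ** A) \<subseteq> null_mat A"
  proof
    fix x assume "x \<in> null_mat (X ** A)"
    then have "A *v ((X ** A) *v x) = 0" by (simp add: null_mat_def)
    then show "x \<in> null_mat A"
      by (simp add: null_mat_def matrix_vector_mul_assoc matrix_mul_assoc assms)
  qed
qed

lemma idempotent_is_projector:
  assumes idem: "P ** P = P"
  shows "is_projector P (range_mat P) (null_mat P)"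
  unfolding is_projector_def
proof (intro conjI allI ballI)
  show fix_range: "P *v x = x" if "x \<in> range_mat P" for x
    using that by (auto simp: range_mat_def matrix_vector_mul_assoc idem)
  have "range_mat P \<inter> null_mat P \<subseteq> {0}"
    using fix_range by (auto simp: null_mat_def)
  moreover have "0 \<in> range_mat P \<inter> null_mat P"
    unfolding null_mat_def range_mat_def by (auto intro: exI[of _ 0])
  ultimately show "range_mat P \<inter> null_mat P = {0}" by blast
  show "\<exists>x\<in>range_mat P. \<exists>y\<in>null_mat P. z = x + y" for z
  proof (intro bexI)
    show "z = P *v z + (z - P *v z)" by simp
    show "P *v z \<in> range_mat P" by (auto simp: range_mat_def)
    show "z - P *v z \<in> null_mat P"
      by (simp add: null_mat_def matrix_vector_mult_diff_distrib matrix_vector_mul_assoc idem)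
  qed
  show "P *v y = 0" if "y \<in> null_mat P" for y
    using that by (simp add: null_mat_def)
qed

theorem theorem2p3:
  fixes A Am AGD :: "complex^'n^'n"
  assumes "Am \<in> inner_inverses A"
    and "AGD \<in> GD_inverses A"
  defines "AGD1 \<equiv> AGD ** A ** Am"
  shows "(A ** AGD1 ** A = A \<and> AGD1 ** A ** AGD1 = AGD1)
    \<and> (\<forall>m::nat. m \<ge> 1 \<longrightarrow>
           matpow A m ** AGD1 = matpow A m ** Am \<and> AGD1 ** matpow A m = AGD ** matpow A m)
    \<and> is_projector (A ** AGD1) (range_mat A) (null_mat (A ** Am))
    \<and> is_projector (AGD1 ** A) (range_mat (AGD ** A)) (null_mat A)"
proof -
  have Am: "A ** Am ** A = A" using assms(1) by (simp add: inner_inverses_def)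
  have AGD: "A ** AGD ** A = A" using assms(2) by (simp add: GD_inverses_def)
  have left: "A ** AGD1 = A ** Am"
    unfolding AGD1_def using AGD by (rule inner_inverse_mult_left)
  have right: "AGD1 ** A = AGD ** A"
    unfolding AGD1_def using Am by (rule inner_inverse_mult_right)
  have "A ** AGD1 ** A = A" using left Am by simp
  moreover have "AGD1 ** A ** AGD1 = AGD1"
  proof -
    have "AGD1 ** A ** AGD1 = (AGD ** A) ** (AGD ** A) ** Am"
      unfolding right by (simp add: AGD1_def matrix_mul_assoc)
    also have "\<dots> = AGD1"
      by (simp add: inner_inverse_idempotent_right[OF AGD] AGD1_def)
    finally show ?thesis .
  qed
  moreover have "matpow A m ** AGD1 = matpow A m ** Am \<and> AGD1 ** matpow A m = AGD ** matpow A m"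
    if "m \<ge> 1" for m
    using that matpow_Suc_mult_cong[OF left] mult_matpow_Suc_cong[OF right]
    by (cases m) auto
  moreover have "is_projector (A ** AGD1) (range_mat A) (null_mat (A ** Am))"
    using idempotent_is_projector[OF inner_inverse_idempotent_left[OF Am]]
    by (simp add: left range_mat_inner_inverse[OF Am])
  moreover have "is_projector (AGD1 ** A) (range_mat (AGD ** A)) (null_mat A)"
    using idempotent_is_projector[OF inner_inverse_idempotent_right[OF AGD]]
    by (simp add: right null_mat_inner_inverse[OF AGD])
  ultimately show ?thesis by blast
qed

end
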